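(* Let $(G,X,\Gamma)$ be a $(\mu,\nu)$-path system group containing a $\delta$-constricting element $(g,A)$ with $\delta$-constricting map $\pi_A$, and let $\pi_{uA}$ ($u\in G$) be the translated maps described in the context. There exists $\theta\ge1$ such that: (I) for every $u\in G$, $\max\{\operatorname{diam}_{uA}(A),\operatorname{diam}_A(uA)\}>\theta$ if and only if $d_{Haus}(uA,A)\le\theta$; (II) $E(g,A)=\{u\in G: d_{Haus}(uA,A)\le\theta\}$; (III) $[E(g,A):\langle g\rangle]\le\theta$.
   Context: A path is a rectifiable continuous map $\alpha\colon[a,b]\to X$ parametrised by arc length; it is a $(\kappa,\lambda)$-quasi-geodesic if $d(\alpha(t),\alpha(t'))\le|t-t'|\le\kappa d(\alpha(t),\alpha(t'))+\lambda$. A $(\mu,\nu)$-path system group $(G,X,\Gamma)$ is a group $G$ acting properly by isometries on a geodesic metric space $X$ together with a $G$-invariant collection $\Gamma$ of paths closed under subpaths, such that any two points are joined by an element of $\Gamma$ and every element is a $(\mu,\nu)$-quasi-geodesic. A map $\pi_A\colon X\to A$ is $\delta$-constricting if (CS1) $d(x,\pi_A(x))\le\delta$ for $x\in A$, and (CS2) for all $x,y\in X$ and $\gamma\in\Gamma$ joining them, if $d(\pi_A(x),\pi_A(y))>\delta$ then $\gamma$ meets $B_X(\pi_A(x),\delta)$ and $B_X(\pi_A(y),\delta)$. An element $g$ is $\delta$-constricting, written $(g,A)$, if it has infinite order and $A$ is a $\langle g\rangle$-invariant subset admitting a $\delta$-constricting map $\pi_A$, on which $\langle g\rangle$ acts $\delta$-coboundedly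 (for all $a,a'\in A$ some $k\in\langle g\rangle$ has $d(a,ka')\le\delta$). Translated maps: fix a set $R$ of representatives of $G/\mathrm{Stab}(A)$; for $u\in G$ let $u_0\in R$ with $uA=u_0A$ and set $\pi_{uA}(x)=u_0\pi_A(u_0^{-1}x)$. $\operatorname{diam}_{B}(C)=\operatorname{diam}(\pi_B(C))$. $d_{Haus}$ is the Hausdorff distance. The elementary closure is $E(g,A)=\{u\in G: d_{Haus}(uA,A)<\infty\}$. *)

theory Defs
  imports "HOL-Analysis.Analysis" "HOL-Algebra.Coset" "HOL-Library.Extended_Real"
begin

text \<open>The space X is the whole of a metric-space type 'a.
  A path is a triple (a, b, alpha) standing for alpha restricted to [a,b].\<close>

type_synonym 'a path_t = "real \<times> real \<times> (real \<Rightarrow> 'a)"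

definition geodesic_space :: "'a::metric_space itself \<Rightarrow> bool" where
  "geodesic_space _ \<longleftrightarrow> (\<forall>x y::'a. \<exists>\<gamma>::real \<Rightarrow> 'a. \<gamma> 0 = x \<and> \<gamma> (dist x y) = y \<and>
      (\<forall>s\<in>{0..dist x y}. \<forall>t\<in>{0..dist x y}. dist (\<gamma> s) (\<gamma> t) = \<bar>s - t\<bar>))"

definition partitions :: "real \<Rightarrow> real \<Rightarrow> real list set" where
  "partitions s t = {ts. ts \<noteq> [] \<and> sorted ts \<and> hd ts = s \<and> last ts = t \<and> set ts \<subseteq> {s..t}}"

definition poly_length :: "(real \<Rightarrow> 'a::metric_space) \<Rightarrow> real list \<Rightarrow> real" where
  "poly_length \<alpha> ts = (\<Sum>i<length ts - 1. dist (\<alpha> (ts ! i)) (\<alpha> (ts ! Suc i)))"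

definition curve_length :: "(real \<Rightarrow> 'a::metric_space) \<Rightarrow> real \<Rightarrow> real \<Rightarrow> ereal" where
  "curve_length \<alpha> s t = (SUP ts\<in>partitions s t. ereal (poly_length \<alpha> ts))"

definition is_path :: "'a::metric_space path_t \<Rightarrow> bool" where
  "is_path p \<longleftrightarrow> (case p of (a, b, \<alpha>) \<Rightarrow> a \<le> b \<and> continuous_on {a..b} \<alpha> \<and>
      curve_length \<alpha> a b < \<infinity> \<and>
      (\<forall>s t. a \<le> s \<and> s \<le> t \<and> t \<le> b \<longrightarrow> curve_length \<alpha> s t = ereal (t - s)))"

definition quasi_geodesic :: "real \<Rightarrow> real \<Rightarrow> 'a::metric_space path_t \<Rightarrow> bool" where
  "quasi_geodesic \<kappa> lam p \<longleftrightarrow> is_path p \<and> (case p of (a, b, \<alpha>) \<Rightarrow>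
      (\<forall>t\<in>{a..b}. \<forall>t'\<in>{a..b}. dist (\<alpha> t) (\<alpha> t') \<le> \<bar>t - t'\<bar> \<and>
                                 \<bar>t - t'\<bar> \<le> \<kappa> * dist (\<alpha> t) (\<alpha> t') + lam))"

definition joins :: "'a path_t \<Rightarrow> 'a \<Rightarrow> 'a \<Rightarrow> bool" where
  "joins p x y \<longleftrightarrow> (case p of (a, b, \<alpha>) \<Rightarrow> \<alpha> a = x \<and> \<alpha> b = y)"

definition meets :: "'a path_t \<Rightarrow> 'a::metric_space set \<Rightarrow> bool" where
  "meets p B \<longleftrightarrow> (case p of (a, b, \<alpha>) \<Rightarrow> (\<exists>t\<in>{a..b}. \<alpha> t \<in> B))"

definition isometric_proper_action ::
  "('g, 'b) monoid_scheme \<Rightarrow> ('g \<Rightarrow> 'a::metric_space \<Rightarrow> 'a) \<Rightarrow> bool" where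
  "isometric_proper_action G act \<longleftrightarrow>
     (\<forall>x. act \<one>\<^bsub>G\<^esub> x = x) \<and>
     (\<forall>g\<in>carrier G. \<forall>h\<in>carrier G. \<forall>x. act (g \<otimes>\<^bsub>G\<^esub> h) x = act g (act h x)) \<and>
     (\<forall>g\<in>carrier G. \<forall>x y. dist (act g x) (act g y) = dist x y) \<and>
     (\<forall>x r. finite {g\<in>carrier G. dist x (act g x) \<le> r})"

definition path_system_group ::
  "real \<Rightarrow> real \<Rightarrow> ('g, 'b) monoid_scheme \<Rightarrow> ('g \<Rightarrow> 'a::metric_space \<Rightarrow> 'a) \<Rightarrow> 'a path_t set \<Rightarrow> bool" where
  "path_system_group \<mu> \<nu> G act \<Gamma> \<longleftrightarrow>
     group G \<and> geodesic_space TYPE('a) \<and> isometric_proper_action G act \<and>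
     (\<forall>g\<in>carrier G. \<forall>(a, b, \<alpha>)\<in>\<Gamma>. (a, b, act g \<circ> \<alpha>) \<in> \<Gamma>) \<and>
     (\<forall>(a, b, \<alpha>)\<in>\<Gamma>. \<forall>c d. a \<le> c \<and> c \<le> d \<and> d \<le> b \<longrightarrow> (c, d, \<alpha>) \<in> \<Gamma>) \<and>
     (\<forall>x y. \<exists>p\<in>\<Gamma>. joins p x y) \<and>
     (\<forall>p\<in>\<Gamma>. quasi_geodesic \<mu> \<nu> p)"

text \<open>Balls B_X(p, delta) are taken closed.\<close>
definition constricting_map ::
  "'a path_t set \<Rightarrow> real \<Rightarrow> 'a::metric_space set \<Rightarrow> ('a \<Rightarrow> 'a) \<Rightarrow> bool" where
  "constricting_map \<Gamma> \<delta> A \<pi> \<longleftrightarrow>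
     (\<forall>x. \<pi> x \<in> A) \<and>
     (\<forall>x\<in>A. dist x (\<pi> x) \<le> \<delta>) \<and>
     (\<forall>x y. \<forall>p\<in>\<Gamma>. joins p x y \<and> dist (\<pi> x) (\<pi> y) > \<delta> \<longrightarrow>
         meets p (cball (\<pi> x) \<delta>) \<and> meets p (cball (\<pi> y) \<delta>))"

definition cyclic_subgroup :: "('g, 'b) monoid_scheme \<Rightarrow> 'g \<Rightarrow> 'g set" where
  "cyclic_subgroup G g = {g [^]\<^bsub>G\<^esub> (k::int) | k. True}"

definition constricting_element ::
  "('g, 'b) monoid_scheme \<Rightarrow> ('g \<Rightarrow> 'a::metric_space \<Rightarrow> 'a) \<Rightarrow> 'a path_t set \<Rightarrow> real \<Rightarrow>
   'g \<Rightarrow> 'a set \<Rightarrow> ('a \<Rightarrow> 'a) \<Rightarrow> bool" where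
  "constricting_element G act \<Gamma> \<delta> g A \<pi> \<longleftrightarrow>
     g \<in> carrier G \<and> (\<forall>n::nat. n > 0 \<longrightarrow> g [^]\<^bsub>G\<^esub> n \<noteq> \<one>\<^bsub>G\<^esub>) \<and>
     (\<forall>k\<in>cyclic_subgroup G g. act k ` A = A) \<and>
     constricting_map \<Gamma> \<delta> A \<pi> \<and>
     (\<forall>a\<in>A. \<forall>a'\<in>A. \<exists>k\<in>cyclic_subgroup G g. dist a (act k a') \<le> \<delta>)"

text \<open>R is a set of representatives of G / Stab(A): each translate uA equals r A
  for a unique r in R.  The coset Stab(A) itself is represented by the identity.\<close>
definition representatives ::
  "('g, 'b) monoid_scheme \<Rightarrow> ('g \<Rightarrow> 'a \<Rightarrow> 'a) \<Rightarrow> 'a set \<Rightarrow> 'g set \<Rightarrow> bool" where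
  "representatives G act A R \<longleftrightarrow> R \<subseteq> carrier G \<and> \<one>\<^bsub>G\<^esub> \<in> R \<and>
     (\<forall>u\<in>carrier G. \<exists>!r. r \<in> R \<and> act r ` A = act u ` A)"

definition rep_of ::
  "('g, 'b) monoid_scheme \<Rightarrow> ('g \<Rightarrow> 'a \<Rightarrow> 'a) \<Rightarrow> 'a set \<Rightarrow> 'g set \<Rightarrow> 'g \<Rightarrow> 'g" where
  "rep_of G act A R u = (THE r. r \<in> R \<and> act r ` A = act u ` A)"

definition transl_map ::
  "('g, 'b) monoid_scheme \<Rightarrow> ('g \<Rightarrow> 'a \<Rightarrow> 'a) \<Rightarrow> 'a set \<Rightarrow> 'g set \<Rightarrow> ('a \<Rightarrow> 'a) \<Rightarrow> 'g \<Rightarrow> 'a \<Rightarrow> 'a" where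
  "transl_map G act A R \<pi> u x =
     (let u0 = rep_of G act A R u in act u0 (\<pi> (act (inv\<^bsub>G\<^esub> u0) x)))"

definition ediam :: "'a::metric_space set \<Rightarrow> ereal" where
  "ediam S = (SUP p\<in>S \<times> S. ereal (dist (fst p) (snd p)))"

definition ehausdist :: "'a::metric_space set \<Rightarrow> 'a set \<Rightarrow> ereal" where
  "ehausdist S T = max (SUP x\<in>S. ereal (infdist x T)) (SUP y\<in>T. ereal (infdist y S))"

definition elementary_closure ::
  "('g, 'b) monoid_scheme \<Rightarrow> ('g \<Rightarrow> 'a::metric_space \<Rightarrow> 'a) \<Rightarrow> 'a set \<Rightarrow> 'g set" where
  "elementary_closure G act A = {u\<in>carrier G. ehausdist (act u ` A) A < \<infinity>}"

definition index_le :: "('g, 'b) monoid_scheme \<Rightarrow> 'g set \<Rightarrow> 'g set \<Rightarrow> real \<Rightarrow> bool" where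
  "index_le G H K c \<longleftrightarrow> finite {u <#\<^bsub>G\<^esub> K | u. u \<in> H} \<and> real (card {u <#\<^bsub>G\<^esub> K | u. u \<in> H}) \<le> c"

end

theory Submission
  imports Defs "HOL-Algebra.Multiplicative_Group"
begin

text \<open>If the projection of a translate \<open>u A\<close> to \<open>A\<close> is long, a quasi-geodesic joining two points
  of \<open>u A\<close> fellow-travels both \<open>A\<close> and \<open>u A\<close> for a long time (Morse property of constricting
  maps). Sampling it at more points than there are group elements moving a base point a bounded
  amount, the pigeonhole principle yields \<open>u g\<^sup>n u\<inverse> = g\<^sup>m\<close> with \<open>n \<noteq> 0\<close>. Such a commensuration
  makes \<open>u A\<close> and \<open>A\<close> uniformly Hausdorff close: projecting quasi-geodesics between far apart
  points of an orbit \<open>u\<inverse>\<langle>g\<rangle>a\<^sub>0\<close> sweeps along whole stretches of \<open>\<langle>g\<rangle>\<close>-orbits. Conversely, a translate at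
  finite Hausdorff distance has unbounded projection, since \<open>\<langle>g\<rangle>\<close> acts on \<open>A\<close> with unbounded
  displacement. All constants depend only on the data, so one threshold \<open>\<theta>\<close> serves for (I) and
  (II); for (III), every coset \<open>u\<langle>g\<rangle>\<close> in \<open>E(g, A)\<close> contains an element moving a base point by a
  bounded amount, and by properness there are finitely many such elements.\<close>

lemma (in group) int_pow_conjugate:
  assumes "u \<in> carrier G" "x \<in> carrier G"
  shows "u \<otimes> x [^] (k::int) \<otimes> inv u = (u \<otimes> x \<otimes> inv u) [^] k"
proof -
  have "(\<lambda>x. u \<otimes> x \<otimes> inv u) \<in> hom G G"
    using assms(1) by (intro homI) (simp_all add: m_assoc inv_solve_left)
  then show ?thesis
    using hom_int_pow[of _ G G x k] assms is_group by simp
qed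

lemma (in group) conjugate_eq_of_double_coset_eq:
  assumes c: "x \<in> carrier G" "y \<in> carrier G" "x' \<in> carrier G" "y' \<in> carrier G" "u \<in> carrier G"
    and eq: "inv x \<otimes> u \<otimes> y = inv x' \<otimes> u \<otimes> y'"
  shows "u \<otimes> (y \<otimes> inv y') \<otimes> inv u = x \<otimes> inv x'"
proof -
  have "u \<otimes> (y \<otimes> inv y') \<otimes> inv u = x \<otimes> (inv x \<otimes> u \<otimes> y) \<otimes> inv y' \<otimes> inv u"
    using c by (simp add: m_assoc[symmetric])
  also have "\<dots> = x \<otimes> (inv x' \<otimes> u \<otimes> y') \<otimes> inv y' \<otimes> inv u"
    by (simp only: eq)
  also have "\<dots> = x \<otimes> inv x'"
    using c by (simp add: m_assoc)
  finally show ?thesis .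
qed

lemma (in group) conjugate_inv_conjugate:
  assumes "u \<in> carrier G" "x \<in> carrier G" "u \<otimes> x \<otimes> inv u = y"
  shows "inv u \<otimes> y \<otimes> inv (inv u) = x"
proof -
  have "inv u \<otimes> y \<otimes> inv (inv u) = (inv u \<otimes> u) \<otimes> x \<otimes> (inv u \<otimes> u)"
    unfolding assms(3)[symmetric] using assms(1,2) by (simp only: inv_inv m_assoc inv_closed m_closed)
  then show ?thesis
    using assms by simp
qed

lemma int_seq_passes_near:
  fixes f :: "nat \<Rightarrow> int"
  assumes "f 0 < j" "j < f N" "\<And>l. l < N \<Longrightarrow> \<bar>f (Suc l) - f l\<bar> \<le> c"
  shows "\<exists>l\<le>N. \<bar>f l - j\<bar> \<le> c"
  using assms
proof (induction N)
  case (Suc N)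
  show ?case
  proof (cases "f N < j")
    case True
    then have "\<bar>f (Suc N) - j\<bar> \<le> c"
      using Suc.prems(2) Suc.prems(3)[of N] by linarith
    then show ?thesis by blast
  next
    case False
    then have "\<exists>l\<le>N. \<bar>f l - j\<bar> \<le> c"
      using Suc by (cases "f N = j") (fastforce intro: order_trans[OF _ abs_ge_zero])+
    then show ?thesis using le_SucI by blast
  qed
qed simp

lemma int_le_mult_self_mult:
  fixes n L :: int
  assumes "n \<noteq> 0" "0 \<le> L"
  shows "L \<le> n * (n * L)"
proof -
  have "1 \<le> n * n"
    using assms(1) by (metis linorder_neq_iff mult_neg_neg zero_less_mult_iff int_one_le_iff_zero_less)
  then show ?thesis
    using mult_right_mono[OF _ assms(2), of 1 "n * n"] by (simp add: mult.assoc)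
qed

lemma ereal_less_ediam_iff: "ereal \<theta> < ediam S \<longleftrightarrow> (\<exists>p\<in>S. \<exists>q\<in>S. \<theta> < dist p q)"
  unfolding ediam_def by (auto simp: less_SUP_iff)

lemma ehausdist_le_ereal_iff:
  "ehausdist S T \<le> ereal \<theta> \<longleftrightarrow> (\<forall>x\<in>S. infdist x T \<le> \<theta>) \<and> (\<forall>y\<in>T. infdist y S \<le> \<theta>)"
  unfolding ehausdist_def by (simp add: SUP_le_iff)

lemma ehausdist_finite_imp_bounded:
  assumes "ehausdist S T < \<infinity>"
  obtains C where "\<And>x. x \<in> S \<Longrightarrow> infdist x T \<le> C"
proof -
  have "(SUP x\<in>S. ereal (infdist x T)) < \<infinity>"
    using order.strict_trans1[OF max.cobounded1 assms[unfolded ehausdist_def]] .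
  then obtain n :: nat where "(SUP x\<in>S. ereal (infdist x T)) < ereal (real n)"
    using less_PInf_Ex_of_nat by auto
  then have "infdist x T \<le> real n" if "x \<in> S" for x
    using order.strict_trans1[OF SUP_upper[OF that]] by (metis ereal_less_eq(3) less_imp_le)
  then show thesis by (rule that)
qed

lemma infdist_less_imp_ex_dist_less:
  assumes "A \<noteq> {}" "infdist x A < e"
  shows "\<exists>a\<in>A. dist x a < e"
  using assms cInf_lessD[of "dist x ` A" e] by (simp add: infdist_notempty)

lemma rep_of_spec:
  assumes "representatives G act A R" "u \<in> carrier G"
  shows "rep_of G act A R u \<in> carrier G" "act (rep_of G act A R u) ` A = act u ` A"
proof -
  have "\<exists>!r. r \<in> R \<and> act r ` A = act u ` A"
    using assms unfolding representatives_def by blast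
  then have "rep_of G act A R u \<in> R \<and> act (rep_of G act A R u) ` A = act u ` A"
    unfolding rep_of_def by (rule theI')
  then show "rep_of G act A R u \<in> carrier G" "act (rep_of G act A R u) ` A = act u ` A"
    using assms(1) unfolding representatives_def by blast+
qed

section \<open>Constricting maps along quasi-geodesics\<close>

lemma constricting_map_in: "constricting_map \<Gamma> \<delta> S \<rho> \<Longrightarrow> \<rho> x \<in> S"
  unfolding constricting_map_def by blast

lemma constricting_map_dist_self: "constricting_map \<Gamma> \<delta> S \<rho> \<Longrightarrow> x \<in> S \<Longrightarrow> dist x (\<rho> x) \<le> \<delta>"
  unfolding constricting_map_def by blast

lemma constricting_map_delta_nonneg: "constricting_map \<Gamma> \<delta> S \<rho> \<Longrightarrow> 0 \<le> \<delta>"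
  using constricting_map_dist_self[OF _ constricting_map_in] zero_le_dist order_trans by metis

lemma constricting_map_path_meets:
  assumes "constricting_map \<Gamma> \<delta> S \<rho>" "(a, b, \<alpha>) \<in> \<Gamma>" "\<delta> < dist (\<rho> (\<alpha> a)) (\<rho> (\<alpha> b))"
  shows "\<exists>t\<in>{a..b}. dist (\<alpha> t) (\<rho> (\<alpha> a)) \<le> \<delta>" "\<exists>t\<in>{a..b}. dist (\<alpha> t) (\<rho> (\<alpha> b)) \<le> \<delta>"
proof -
  have "meets (a, b, \<alpha>) (cball (\<rho> (\<alpha> a)) \<delta>) \<and> meets (a, b, \<alpha>) (cball (\<rho> (\<alpha> b)) \<delta>)"
    using assms unfolding constricting_map_def joins_def by fastforce
  then show "\<exists>t\<in>{a..b}. dist (\<alpha> t) (\<rho> (\<alpha> a)) \<le> \<delta>" "\<exists>t\<in>{a..b}. dist (\<alpha> t) (\<rho> (\<alpha> b)) \<le> \<delta>"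
    by (auto simp: meets_def dist_commute)
qed

locale constricting_action =
  fixes G :: "('g, 'b) monoid_scheme" (structure)
    and act :: "'g \<Rightarrow> 'a::metric_space \<Rightarrow> 'a"
    and \<Gamma> :: "'a path_t set"
    and \<mu> \<nu> \<delta> :: real and g :: 'g and A :: "'a set" and \<pi> :: "'a \<Rightarrow> 'a"
  assumes path_system: "path_system_group \<mu> \<nu> G act \<Gamma>"
    and constricting: "constricting_element G act \<Gamma> \<delta> g A \<pi>"
begin

sublocale group G
  using path_system by (simp add: path_system_group_def)

lemma act_one [simp]: "act \<one> x = x"
  using path_system by (simp add: path_system_group_def isometric_proper_action_def)

lemma act_mult: "u \<in> carrier G \<Longrightarrow> v \<in> carrier G \<Longrightarrow> act (u \<otimes> v) x = act u (act v x)"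
  using path_system by (simp add: path_system_group_def isometric_proper_action_def)

lemma dist_act [simp]: "u \<in> carrier G \<Longrightarrow> dist (act u x) (act u y) = dist x y"
  using path_system by (simp add: path_system_group_def isometric_proper_action_def)

lemma finite_displacing: "finite {h \<in> carrier G. dist x (act h x) \<le> r}"
  using path_system by (simp add: path_system_group_def isometric_proper_action_def)

lemma act_act_inv [simp]: "u \<in> carrier G \<Longrightarrow> act u (act (inv u) x) = x"
  by (metis act_mult act_one inv_closed r_inv)

lemma dist_act_inv: "u \<in> carrier G \<Longrightarrow> dist (act (inv u) x) y = dist x (act u y)"
  by (metis act_act_inv dist_act inv_closed)

lemma path_act: "u \<in> carrier G \<Longrightarrow> (a, b, \<alpha>) \<in> \<Gamma> \<Longrightarrow> (a, b, act u \<circ> \<alpha>) \<in> \<Gamma>"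
  using path_system unfolding path_system_group_def by fast

lemma subpath: "(a, b, \<alpha>) \<in> \<Gamma> \<Longrightarrow> a \<le> c \<Longrightarrow> c \<le> d \<Longrightarrow> d \<le> b \<Longrightarrow> (c, d, \<alpha>) \<in> \<Gamma>"
  using path_system unfolding path_system_group_def by fast

lemma exists_path:
  obtains a b \<alpha> where "(a, b, \<alpha>) \<in> \<Gamma>" "\<alpha> a = x" "\<alpha> b = y"
proof -
  obtain p where "p \<in> \<Gamma>" "joins p x y"
    using path_system unfolding path_system_group_def by blast
  then show thesis by (cases p) (auto simp: joins_def intro: that)
qed

lemma path_quasi_geodesic: "(a, b, \<alpha>) \<in> \<Gamma> \<Longrightarrow> quasi_geodesic \<mu> \<nu> (a, b, \<alpha>)"
  using path_system unfolding path_system_group_def by blast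

lemma path_le: "(a, b, \<alpha>) \<in> \<Gamma> \<Longrightarrow> a \<le> b"
  using path_quasi_geodesic by (simp add: quasi_geodesic_def is_path_def)

lemma path_dist_le:
  "(a, b, \<alpha>) \<in> \<Gamma> \<Longrightarrow> t \<in> {a..b} \<Longrightarrow> t' \<in> {a..b} \<Longrightarrow> dist (\<alpha> t) (\<alpha> t') \<le> \<bar>t - t'\<bar>"
  using path_quasi_geodesic by (simp add: quasi_geodesic_def)

text \<open>Nothing forces \<open>\<mu>\<close> and \<open>\<nu>\<close> to be positive; these replacements are at least \<open>1\<close>.\<close>

definition qg_mult :: real where "qg_mult = \<bar>\<mu>\<bar> + 1"
definition qg_add :: real where "qg_add = \<bar>\<nu>\<bar> + 1"

lemma qg_mult_ge_1: "1 \<le> qg_mult" and qg_add_ge_1: "1 \<le> qg_add"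
  by (simp_all add: qg_mult_def qg_add_def)

lemma qg_mult_mono: "x \<le> y \<Longrightarrow> qg_mult * x \<le> qg_mult * y"
  using qg_mult_ge_1 by (simp add: mult_left_mono)

lemma le_qg_mult: "0 \<le> x \<Longrightarrow> x \<le> qg_mult * x"
  using mult_right_mono[OF qg_mult_ge_1] by fastforce

lemma path_param_le:
  assumes "(a, b, \<alpha>) \<in> \<Gamma>" "t \<in> {a..b}" "t' \<in> {a..b}"
  shows "\<bar>t - t'\<bar> \<le> qg_mult * dist (\<alpha> t) (\<alpha> t') + qg_add"
proof -
  have "\<mu> * dist (\<alpha> t) (\<alpha> t') \<le> qg_mult * dist (\<alpha> t) (\<alpha> t')"
    unfolding qg_mult_def by (intro mult_right_mono) auto
  then show ?thesis
    using path_quasi_geodesic[OF assms(1)] assms(2,3) unfolding qg_add_def quasi_geodesic_def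
    by fastforce
qed

lemma path_param_le_of_dist_le:
  assumes "(a, b, \<alpha>) \<in> \<Gamma>" "t \<in> {a..b}" "t' \<in> {a..b}" "dist (\<alpha> t) (\<alpha> t') \<le> r"
  shows "\<bar>t - t'\<bar> \<le> qg_mult * r + qg_add"
  using path_param_le[OF assms(1-3)] qg_mult_mono[OF assms(4)] by linarith

lemma path_dist_le_ends:
  assumes "(a, b, \<alpha>) \<in> \<Gamma>" "t \<in> {a..b}" "t' \<in> {a..b}"
  shows "dist (\<alpha> t) (\<alpha> t') \<le> qg_mult * dist (\<alpha> a) (\<alpha> b) + qg_add"
proof -
  have "a \<le> b" using path_le[OF assms(1)] .
  then have "dist (\<alpha> t) (\<alpha> t') \<le> \<bar>a - b\<bar>"
    using path_dist_le[OF assms] assms(2,3) by auto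
  then show ?thesis using path_param_le[OF assms(1), of a b] \<open>a \<le> b\<close> by auto
qed

definition proj_bound :: "real \<Rightarrow> real" where
  "proj_bound r = qg_mult * r + qg_add + 2 * \<delta>"

lemma dist_constricting_map_le:
  assumes cm: "constricting_map \<Gamma> \<delta> S \<rho>" and s: "s \<in> S" and d: "dist x s \<le> r"
  shows "dist x (\<rho> x) \<le> proj_bound r"
proof -
  have \<delta>: "0 \<le> \<delta>" using constricting_map_delta_nonneg[OF cm] .
  have "r \<le> qg_mult * r" and "qg_mult * dist x s \<le> qg_mult * r"
    using le_qg_mult qg_mult_mono d zero_le_dist[of x s] by (meson order_trans)+
  moreover obtain a b \<alpha> where p: "(a, b, \<alpha>) \<in> \<Gamma>" "\<alpha> a = x" "\<alpha> b = s"
    by (rule exists_path)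
  ultimately show ?thesis
  proof (cases "\<delta> < dist (\<rho> x) (\<rho> s)")
    case True
    then obtain t where t: "t \<in> {a..b}" "dist (\<alpha> t) (\<rho> x) \<le> \<delta>"
      using constricting_map_path_meets(1)[OF cm p(1)] p by auto
    have "dist x (\<alpha> t) \<le> qg_mult * dist x s + qg_add"
      using path_dist_le_ends[OF p(1) _ t(1), of a] path_le[OF p(1)] p by simp
    then show ?thesis
      using t(2) dist_triangle[of x "\<rho> x" "\<alpha> t"] \<open>qg_mult * dist x s \<le> qg_mult * r\<close> \<delta>
      unfolding proj_bound_def by linarith
  next
    case False
    then show ?thesis
      using dist_triangle[of x "\<rho> x" s] dist_triangle[of s "\<rho> x" "\<rho> s"]
        constricting_map_dist_self[OF cm s] d \<open>r \<le> qg_mult * r\<close> qg_add_ge_1 \<delta>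
      unfolding proj_bound_def by (simp add: dist_commute)
  qed
qed

definition step_bound :: real where
  "step_bound = 2 * \<delta> + qg_mult + qg_add"

lemma constricting_map_coarse_lipschitz:
  assumes cm: "constricting_map \<Gamma> \<delta> S \<rho>" and d: "dist x y \<le> 1"
  shows "dist (\<rho> x) (\<rho> y) \<le> step_bound"
proof -
  obtain a b \<alpha> where p: "(a, b, \<alpha>) \<in> \<Gamma>" "\<alpha> a = x" "\<alpha> b = y"
    by (rule exists_path)
  have ends: "dist (\<alpha> t) (\<alpha> t') \<le> qg_mult + qg_add" if "t \<in> {a..b}" "t' \<in> {a..b}" for t t'
    using path_dist_le_ends[OF p(1) that] qg_mult_mono[OF d] p by simp
  show ?thesis
  proof (cases "\<delta> < dist (\<rho> x) (\<rho> y)")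
    case True
    then obtain t t' where "t \<in> {a..b}" "dist (\<alpha> t) (\<rho> x) \<le> \<delta>" "t' \<in> {a..b}" "dist (\<alpha> t') (\<rho> y) \<le> \<delta>"
      using constricting_map_path_meets[OF cm p(1)] p by auto
    then show ?thesis
      using ends[of t t'] dist_triangle[of "\<rho> x" "\<rho> y" "\<alpha> t"] dist_triangle[of "\<alpha> t" "\<rho> y" "\<alpha> t'"]
      unfolding step_bound_def by (simp add: dist_commute)
  qed (use constricting_map_delta_nonneg[OF cm] qg_mult_ge_1 qg_add_ge_1 in \<open>auto simp: step_bound_def\<close>)
qed

lemma proj_bound_nonneg: "0 \<le> \<delta> \<Longrightarrow> 0 \<le> r \<Longrightarrow> 0 \<le> proj_bound r"
  using qg_mult_ge_1 qg_add_ge_1 unfolding proj_bound_def by simp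

text \<open>The hypothesis \<open>{e, e'} = {a, b}\<close> covers both orientations at once, as \<open>\<Gamma>\<close> need not be
  closed under reversing paths.\<close>

lemma path_near_proj_of_end:
  assumes cm: "constricting_map \<Gamma> \<delta> S \<rho>" and p: "(a, b, \<alpha>) \<in> \<Gamma>"
    and ends: "{e, e'} = {a, b}" and s: "s \<in> S" "dist (\<alpha> e) s \<le> r"
  shows "\<exists>t\<in>{a..b}. dist (\<alpha> t) (\<rho> (\<alpha> e')) \<le> proj_bound r + \<delta>"
proof (cases "\<delta> < dist (\<rho> (\<alpha> a)) (\<rho> (\<alpha> b))")
  case True
  have "0 \<le> proj_bound r"
    using proj_bound_nonneg constricting_map_delta_nonneg[OF cm] s(2) zero_le_dist order_trans by metis
  then show ?thesis
    using constricting_map_path_meets[OF cm p True] ends by (force simp: doubleton_eq_iff)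
next
  case False
  have "dist (\<rho> (\<alpha> e)) (\<rho> (\<alpha> e')) \<le> \<delta>"
    using False ends constricting_map_delta_nonneg[OF cm] by (auto simp: doubleton_eq_iff dist_commute)
  then have "dist (\<alpha> e) (\<rho> (\<alpha> e')) \<le> proj_bound r + \<delta>"
    using dist_constricting_map_le[OF cm s] dist_triangle[of "\<alpha> e" "\<rho> (\<alpha> e')" "\<rho> (\<alpha> e)"] by linarith
  moreover have "e \<in> {a..b}"
    using ends path_le[OF p] by (auto simp: doubleton_eq_iff)
  ultimately show ?thesis by blast
qed

definition morse_bound :: "real \<Rightarrow> real" where
  "morse_bound r = qg_mult * (2 * proj_bound r + 2 * \<delta>) + qg_add + proj_bound r + \<delta>"

lemma constricting_map_morse:
  assumes cm: "constricting_map \<Gamma> \<delta> S \<rho>" and p: "(a, b, \<alpha>) \<in> \<Gamma>"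
    and s: "s \<in> S" "dist (\<alpha> a) s \<le> r" and s': "s' \<in> S" "dist (\<alpha> b) s' \<le> r"
    and t: "t \<in> {a..b}"
  shows "dist (\<alpha> t) (\<rho> (\<alpha> t)) \<le> morse_bound r"
proof -
  have left: "(a, t, \<alpha>) \<in> \<Gamma>" and right: "(t, b, \<alpha>) \<in> \<Gamma>"
    using subpath[OF p] t by auto
  obtain t1 where t1: "t1 \<in> {a..t}" "dist (\<alpha> t1) (\<rho> (\<alpha> t)) \<le> proj_bound r + \<delta>"
    using path_near_proj_of_end[OF cm left refl s] by blast
  obtain t2 where t2: "t2 \<in> {t..b}" "dist (\<alpha> t2) (\<rho> (\<alpha> t)) \<le> proj_bound r + \<delta>"
    using path_near_proj_of_end[OF cm right insert_commute s'] by blast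
  have in_ab: "t1 \<in> {a..b}" "t2 \<in> {a..b}" using t t1 t2 by auto
  have "dist (\<alpha> t1) (\<alpha> t2) \<le> 2 * proj_bound r + 2 * \<delta>"
    using t1(2) t2(2) dist_triangle3[of "\<alpha> t1" "\<alpha> t2" "\<rho> (\<alpha> t)"] by (simp add: dist_commute)
  then have "t2 - t1 \<le> qg_mult * (2 * proj_bound r + 2 * \<delta>) + qg_add"
    using path_param_le_of_dist_le[OF p in_ab] by fastforce
  moreover have "dist (\<alpha> t) (\<alpha> t1) \<le> t2 - t1"
    using path_dist_le[OF p t in_ab(1)] t1(1) t2(1) by auto
  ultimately show ?thesis
    using t1(2) dist_triangle[of "\<alpha> t" "\<rho> (\<alpha> t)" "\<alpha> t1"] unfolding morse_bound_def by linarith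
qed

section \<open>The action of \<open>\<langle>g\<rangle>\<close> on \<open>A\<close>\<close>

abbreviation gpow :: "int \<Rightarrow> 'g" where
  "gpow i \<equiv> g [^] i"

lemma g_carrier [simp]: "g \<in> carrier G"
  using constricting by (simp add: constricting_element_def)

lemma gpow_eq_iff [simp]: "gpow i = gpow j \<longleftrightarrow> i = j"
proof -
  have "ord g = 0"
    using constricting by (auto simp: constricting_element_def ord_eq_0)
  then show ?thesis by (auto simp: int_pow_eq)
qed

lemma act_gpow_gpow: "act (gpow i) (act (gpow j) x) = act (gpow (i + j)) x"
  by (simp add: act_mult[symmetric] int_pow_mult)

lemma constricting_map_A: "constricting_map \<Gamma> \<delta> A \<pi>"
  using constricting by (simp add: constricting_element_def)

lemma delta_nonneg: "0 \<le> \<delta>"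
  using constricting_map_delta_nonneg[OF constricting_map_A] .

lemma act_gpow_in_A: "x \<in> A \<Longrightarrow> act (gpow i) x \<in> A"
  using constricting unfolding constricting_element_def cyclic_subgroup_def by blast

lemma exists_gpow_near: "x \<in> A \<Longrightarrow> y \<in> A \<Longrightarrow> \<exists>i. dist x (act (gpow i) y) \<le> \<delta>"
  using constricting unfolding constricting_element_def cyclic_subgroup_def by blast

lemma dist_act_gpow_gpow: "dist (act (gpow i) x) (act (gpow j) x) = dist (act (gpow (i - j)) x) x"
  by (metis act_gpow_gpow diff_add_cancel add.commute dist_act int_pow_closed g_carrier)

definition base_point :: 'a where
  "base_point = (SOME a. a \<in> A)"

lemma base_point_in_A: "base_point \<in> A"
  unfolding base_point_def by (rule someI[of "\<lambda>a. a \<in> A"]) (rule constricting_map_in[OF constricting_map_A])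

text \<open>\<open>A\<close> is \<open>\<delta>\<close>-close to the \<open>\<langle>g\<rangle>\<close>-orbit of the base point, and powers of \<open>g\<close> commute.\<close>

lemma gpow_displacement_close:
  assumes "x \<in> A"
  shows "\<bar>dist (act (gpow i) x) x - dist (act (gpow i) base_point) base_point\<bar> \<le> 2 * \<delta>"
proof -
  obtain j where j: "dist x (act (gpow j) base_point) \<le> \<delta>"
    using exists_gpow_near[OF assms base_point_in_A] by blast
  define y where "y = act (gpow j) base_point"
  have "dist (act (gpow i) y) y = dist (act (gpow i) base_point) base_point"
    unfolding y_def act_gpow_gpow dist_act_gpow_gpow by simp
  moreover have "dist (act (gpow i) x) (act (gpow i) y) = dist x y"
    by simp
  ultimately show ?thesis
    using j[folded y_def] dist_commute[of y x] dist_commute[of "act (gpow i) y" "act (gpow i) x"]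
      dist_triangle[of "act (gpow i) x" x "act (gpow i) y"] dist_triangle[of "act (gpow i) y" x y]
      dist_triangle[of "act (gpow i) y" y "act (gpow i) x"] dist_triangle[of "act (gpow i) x" y x]
    by (simp add: abs_le_iff)
qed

lemma finite_gpow_displacing: "finite {i. dist (act (gpow i) x) x \<le> s}"
proof (rule finite_imageD)
  show "finite (gpow ` {i. dist (act (gpow i) x) x \<le> s})"
    by (rule finite_subset[OF _ finite_displacing[of x s]]) (auto simp: dist_commute)
qed (simp add: inj_on_def)

definition index_bound :: "real \<Rightarrow> int" where
  "index_bound s = Max (insert 0 (abs ` {i. dist (act (gpow i) base_point) base_point \<le> s + 2 * \<delta>}))"

lemma index_bound_nonneg: "0 \<le> index_bound s"
  unfolding index_bound_def by (simp add: finite_gpow_displacing)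

lemma abs_le_index_bound:
  assumes "x \<in> A" "dist (act (gpow i) x) x \<le> s"
  shows "\<bar>i\<bar> \<le> index_bound s"
  using gpow_displacement_close[OF assms(1), of i] assms(2)
  unfolding index_bound_def by (intro Max_ge) (auto simp: finite_gpow_displacing)

definition displacement_bound :: "int \<Rightarrow> real" where
  "displacement_bound c = (\<Sum>i\<in>{-c..c}. dist (act (gpow i) base_point) base_point) + 2 * \<delta>"

lemma displacement_le_bound:
  assumes "x \<in> A" "\<bar>i\<bar> \<le> c"
  shows "dist (act (gpow i) x) x \<le> displacement_bound c"
proof -
  have "dist (act (gpow i) base_point) base_point \<le> (\<Sum>i\<in>{-c..c}. dist (act (gpow i) base_point) base_point)"
    using assms(2) by (intro member_le_sum) auto
  then show ?thesis
    using gpow_displacement_close[OF assms(1), of i] unfolding displacement_bound_def by linarith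
qed

lemma gpow_displacement_unbounded:
  assumes "x \<in> A"
  shows "\<exists>i. R < dist (act (gpow i) x) x"
proof -
  have "\<not> \<bar>index_bound R + 1\<bar> \<le> index_bound R"
    using index_bound_nonneg[of R] by simp
  then show ?thesis
    using abs_le_index_bound[OF assms] not_le by blast
qed

lemma dist_orbit_index_le:
  assumes "x \<in> A" "dist (act (gpow i) x) (act (gpow j) x) \<le> s"
  shows "\<bar>i - j\<bar> \<le> index_bound s"
  using abs_le_index_bound[OF assms(1)] assms(2) by (simp add: dist_act_gpow_gpow)

text \<open>A discrete intermediate value theorem along the orbit \<open>\<langle>g\<rangle>x\<^sub>0\<close>.\<close>

lemma curve_in_A_passes_orbit_point:
  fixes f :: "real \<Rightarrow> 'a"
  assumes x0: "x0 \<in> A" and ab: "a \<le> b"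
    and f_A: "\<And>t. t \<in> {a..b} \<Longrightarrow> f t \<in> A"
    and f_step: "\<And>t t'. t \<in> {a..b} \<Longrightarrow> t' \<in> {a..b} \<Longrightarrow> \<bar>t - t'\<bar> \<le> 1 \<Longrightarrow> dist (f t) (f t') \<le> W"
    and start: "dist (f a) (act (gpow i) x0) \<le> r" and stop: "dist (f b) (act (gpow k) x0) \<le> r"
    and between: "i + index_bound (r + \<delta>) < j" "j + index_bound (r + \<delta>) < k"
  shows "\<exists>t\<in>{a..b}. dist (f t) (act (gpow j) x0) \<le> \<delta> + displacement_bound (index_bound (W + 2 * \<delta>))"
proof -
  define M where "M = nat \<lceil>b - a\<rceil>"
  define \<tau> where "\<tau> l = min (a + real l) b" for l :: nat
  have \<tau>_in: "\<tau> l \<in> {a..b}" for l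
    unfolding \<tau>_def using ab by auto
  have \<tau>_0: "\<tau> 0 = a" and \<tau>_M: "\<tau> M = b"
    unfolding \<tau>_def M_def using ab by (auto simp: min_def) linarith
  have \<tau>_step: "\<bar>\<tau> (Suc l) - \<tau> l\<bar> \<le> 1" for l
    unfolding \<tau>_def by (auto simp: min_def)
  define idx where "idx l = (SOME i. dist (f (\<tau> l)) (act (gpow i) x0) \<le> \<delta>)" for l
  have idx: "dist (f (\<tau> l)) (act (gpow (idx l)) x0) \<le> \<delta>" for l
    unfolding idx_def by (rule someI_ex[OF exists_gpow_near[OF f_A[OF \<tau>_in] x0]])
  have idx_near: "\<bar>idx l - i'\<bar> \<le> index_bound (s + \<delta>)"
    if "dist (f (\<tau> l)) (act (gpow i') x0) \<le> s" for l i' s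
    using idx[of l] that dist_triangle[of "act (gpow (idx l)) x0" "act (gpow i') x0" "f (\<tau> l)"]
    by (intro dist_orbit_index_le[OF x0]) (simp add: dist_commute add.commute)
  have "\<bar>idx (Suc l) - idx l\<bar> \<le> index_bound (W + 2 * \<delta>)" for l
  proof -
    have "dist (f (\<tau> (Suc l))) (f (\<tau> l)) \<le> W"
      using f_step[OF \<tau>_in \<tau>_in \<tau>_step] .
    then show ?thesis
      using idx[of l] dist_triangle[of "f (\<tau> (Suc l))" "act (gpow (idx l)) x0" "f (\<tau> l)"]
        idx_near[of "Suc l" "idx l" "W + \<delta>"] by (simp add: add.assoc)
  qed
  moreover have "idx 0 < j" "j < idx M"
    using idx_near[of 0 i r] idx_near[of M k r] start stop between \<tau>_0 \<tau>_M by auto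
  ultimately obtain l where l: "\<bar>idx l - j\<bar> \<le> index_bound (W + 2 * \<delta>)"
    using int_seq_passes_near[of idx j M] by blast
  have "dist (act (gpow (idx l)) x0) (act (gpow j) x0) \<le> displacement_bound (index_bound (W + 2 * \<delta>))"
    using displacement_le_bound[OF x0 l] by (simp add: dist_act_gpow_gpow)
  then have "dist (f (\<tau> l)) (act (gpow j) x0) \<le> \<delta> + displacement_bound (index_bound (W + 2 * \<delta>))"
    using idx[of l] dist_triangle[of "f (\<tau> l)" "act (gpow j) x0" "act (gpow (idx l)) x0"] by linarith
  then show ?thesis
    using \<tau>_in[of l] by blast
qed

section \<open>Commensurating elements\<close>

definition translate_in_nbhd :: "'g \<Rightarrow> real \<Rightarrow> bool" where
  "translate_in_nbhd u C \<longleftrightarrow> (\<forall>x\<in>A. \<exists>a\<in>A. dist (act u x) a \<le> C)"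

lemma act_conj_gpow:
  assumes "u \<in> carrier G" "u \<otimes> gpow n \<otimes> inv u = gpow m"
  shows "act u (act (gpow (n * r)) z) = act (gpow (m * r)) (act u z)"
proof -
  have "u \<otimes> gpow (n * r) \<otimes> inv u = gpow (m * r)"
    using int_pow_conjugate[OF assms(1), of "gpow n" r] assms by (simp add: int_pow_pow)
  then have "u \<otimes> gpow (n * r) = gpow (m * r) \<otimes> u"
    using assms(1) by (metis inv_closed inv_inv int_pow_closed g_carrier m_closed inv_solve_right)
  then show ?thesis
    using assms(1) by (metis act_mult int_pow_closed g_carrier)
qed

text \<open>If \<open>u\<close> conjugates a nontrivial power of \<open>g\<close> into \<open>\<langle>g\<rangle>\<close>, then a quasi-geodesic between far
  apart points of \<open>u\<inverse>\<langle>g\<rangle>a\<^sub>0\<close> fellow-travels both \<open>A\<close> and \<open>u\<inverse>A\<close>, and its projection to \<open>A\<close>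
  sweeps along the whole stretch of the orbit \<open>\<langle>g\<rangle>x\<^sub>0\<close> between its ends.\<close>

lemma commensurating_path_near_orbit_point:
  assumes u: "u \<in> carrier G" and n: "n \<noteq> 0" and comm: "u \<otimes> gpow n \<otimes> inv u = gpow m"
    and x0: "x0 \<in> A" and a0: "a0 \<in> A" and D: "dist (act u x0) a0 \<le> D"
  shows "\<exists>p. dist (\<pi> p) (act (gpow j) x0) \<le> \<delta> + displacement_bound (index_bound (step_bound + 2 * \<delta>)) \<and>
             dist p (\<pi> p) \<le> morse_bound D \<and> dist (act u p) (\<pi> (act u p)) \<le> morse_bound 0"
proof -
  define c where "c = index_bound (morse_bound D + D + \<delta>)"
  define q where "q = n * (c + \<bar>j\<bar> + 1)"
  have between: "n * - q + c < j" "j + c < n * q"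
    using int_le_mult_self_mult[OF n, of "c + \<bar>j\<bar> + 1"] index_bound_nonneg[of "morse_bound D + D + \<delta>"]
      abs_ge_self[of j] abs_ge_minus_self[of j] unfolding c_def q_def by linarith+
  define z where "z r = act (inv u) (act (gpow (m * r)) a0)" for r
  have z_near: "dist (z r) (act (gpow (n * r)) x0) \<le> D" for r
  proof -
    have "dist (z r) (act (gpow (n * r)) x0) = dist (act (gpow (m * r)) a0) (act (gpow (m * r)) (act u x0))"
      unfolding z_def dist_act_inv[OF u] act_conj_gpow[OF u comm] ..
    then show ?thesis using D by (simp add: dist_commute)
  qed
  obtain a b \<beta> where \<beta>: "(a, b, \<beta>) \<in> \<Gamma>" "\<beta> a = z (- q)" "\<beta> b = z q"
    by (rule exists_path)
  have ab: "a \<le> b" using path_le[OF \<beta>(1)] .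
  have near_A: "dist (\<beta> t) (\<pi> (\<beta> t)) \<le> morse_bound D" if "t \<in> {a..b}" for t
    using constricting_map_morse[OF constricting_map_A \<beta>(1) act_gpow_in_A[OF x0] _ act_gpow_in_A[OF x0] _ that,
        of "n * - q" D "n * q"] z_near[of "- q"] z_near[of q] \<beta>(2,3) by simp
  have near_uA: "dist (act u (\<beta> t)) (\<pi> (act u (\<beta> t))) \<le> morse_bound 0" if "t \<in> {a..b}" for t
    using constricting_map_morse[OF constricting_map_A path_act[OF u \<beta>(1)] act_gpow_in_A[OF a0] _
        act_gpow_in_A[OF a0] _ that] u \<beta>(2,3) by (simp add: z_def)
  have ends: "dist (\<pi> (\<beta> a)) (act (gpow (n * - q)) x0) \<le> morse_bound D + D"
    "dist (\<pi> (\<beta> b)) (act (gpow (n * q)) x0) \<le> morse_bound D + D"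
    using near_A[of a] near_A[of b] ab z_near[of "- q"] z_near[of q] \<beta>(2,3)
      dist_triangle[of "\<pi> (\<beta> a)" "act (gpow (n * - q)) x0" "\<beta> a"]
      dist_triangle[of "\<pi> (\<beta> b)" "act (gpow (n * q)) x0" "\<beta> b"]
    by (simp_all add: dist_commute)
  have step: "dist (\<pi> (\<beta> t)) (\<pi> (\<beta> t')) \<le> step_bound"
    if "t \<in> {a..b}" "t' \<in> {a..b}" "\<bar>t - t'\<bar> \<le> 1" for t t'
    using constricting_map_coarse_lipschitz[OF constricting_map_A] path_dist_le[OF \<beta>(1) that(1,2)] that(3)
    by simp
  obtain t where "t \<in> {a..b}"
    "dist (\<pi> (\<beta> t)) (act (gpow j) x0) \<le> \<delta> + displacement_bound (index_bound (step_bound + 2 * \<delta>))"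
    using curve_in_A_passes_orbit_point[OF x0 ab constricting_map_in[OF constricting_map_A] step ends]
      between unfolding c_def by blast
  then show ?thesis
    using near_A near_uA by blast
qed

definition commens_bound :: "real \<Rightarrow> real" where
  "commens_bound D = 2 * \<delta> + displacement_bound (index_bound (step_bound + 2 * \<delta>)) + morse_bound D + morse_bound 0"

lemma translate_in_nbhd_of_commensurating:
  assumes u: "u \<in> carrier G" and n: "n \<noteq> 0" and comm: "u \<otimes> gpow n \<otimes> inv u = gpow m"
    and x0: "x0 \<in> A" and a0: "a0 \<in> A" and D: "dist (act u x0) a0 \<le> D"
  shows "translate_in_nbhd u (commens_bound D)"
  unfolding translate_in_nbhd_def
proof
  fix x assume x: "x \<in> A"
  obtain j where j: "dist x (act (gpow j) x0) \<le> \<delta>"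
    using exists_gpow_near[OF x x0] by blast
  obtain p where p: "dist (\<pi> p) (act (gpow j) x0) \<le> \<delta> + displacement_bound (index_bound (step_bound + 2 * \<delta>))"
    "dist p (\<pi> p) \<le> morse_bound D" "dist (act u p) (\<pi> (act u p)) \<le> morse_bound 0"
    using commensurating_path_near_orbit_point[OF assms] by blast
  have "dist (act u x) (\<pi> (act u p)) \<le> commens_bound D"
    using j p u
      dist_triangle[of "act u x" "\<pi> (act u p)" "act u (act (gpow j) x0)"]
      dist_triangle[of "act u (act (gpow j) x0)" "\<pi> (act u p)" "act u (\<pi> p)"]
      dist_triangle[of "act u (\<pi> p)" "\<pi> (act u p)" "act u p"]
    unfolding commens_bound_def by (simp add: dist_commute)
  then show "\<exists>a\<in>A. dist (act u x) a \<le> commens_bound D"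
    using constricting_map_in[OF constricting_map_A] by blast
qed

lemma exists_orbit_indices_near:
  assumes u: "u \<in> carrier G" and e: "e \<in> A" "dist p e \<le> Ka" and e': "e' \<in> A" "dist p (act u e') \<le> Kb"
  shows "\<exists>m n. dist (act (gpow m) base_point) (act u (act (gpow n) base_point)) \<le> Ka + Kb + 2 * \<delta> \<and>
               dist p (act u (act (gpow n) base_point)) \<le> Kb + \<delta>"
proof -
  obtain m n where m: "dist e (act (gpow m) base_point) \<le> \<delta>" and n: "dist e' (act (gpow n) base_point) \<le> \<delta>"
    using exists_gpow_near[OF e(1) base_point_in_A] exists_gpow_near[OF e'(1) base_point_in_A] by blast
  define y where "y = act u (act (gpow n) base_point)"
  have "dist p y \<le> Kb + \<delta>"
    using e'(2) n u dist_triangle[of p y "act u e'"] unfolding y_def by simp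
  moreover then have "dist (act (gpow m) base_point) y \<le> Ka + Kb + 2 * \<delta>"
    using e(2) m dist_triangle[of "act (gpow m) base_point" y e] dist_triangle[of e y p]
    by (simp add: dist_commute)
  ultimately show ?thesis unfolding y_def by blast
qed

lemma commensurating_of_separated_points:
  assumes u: "u \<in> carrier G"
    and near_A: "\<And>k. k \<le> N \<Longrightarrow> \<exists>e\<in>A. dist (p k) e \<le> Ka"
    and near_uA: "\<And>k. k \<le> N \<Longrightarrow> \<exists>e\<in>A. dist (p k) (act u e) \<le> Kb"
    and separated: "\<And>k k'. k \<le> N \<Longrightarrow> k' \<le> N \<Longrightarrow> k \<noteq> k' \<Longrightarrow> 2 * (Kb + \<delta>) < dist (p k) (p k')"
    and few: "card {w \<in> carrier G. dist base_point (act w base_point) \<le> Ka + Kb + 2 * \<delta>} \<le> N"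
  shows "\<exists>n m x0 a0. n \<noteq> 0 \<and> u \<otimes> gpow n \<otimes> inv u = gpow m \<and> x0 \<in> A \<and> a0 \<in> A \<and>
           dist (act u x0) a0 \<le> Ka + Kb + 2 * \<delta>"
proof -
  define F where "F = {w \<in> carrier G. dist base_point (act w base_point) \<le> Ka + Kb + 2 * \<delta>}"
  define orb where "orb i = act (gpow i) base_point" for i
  have "\<exists>m n. dist (orb m) (act u (orb n)) \<le> Ka + Kb + 2 * \<delta> \<and> dist (p k) (act u (orb n)) \<le> Kb + \<delta>"
    if "k \<le> N" for k
    using near_A[OF that] near_uA[OF that] exists_orbit_indices_near[OF u] unfolding orb_def by blast
  then obtain mf nf where mn: "\<And>k. k \<le> N \<Longrightarrow> dist (orb (mf k)) (act u (orb (nf k))) \<le> Ka + Kb + 2 * \<delta>"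
    "\<And>k. k \<le> N \<Longrightarrow> dist (p k) (act u (orb (nf k))) \<le> Kb + \<delta>"
    by metis
  define w where "w k = inv (gpow (mf k)) \<otimes> u \<otimes> gpow (nf k)" for k
  have "w k \<in> F" if "k \<le> N" for k
  proof -
    have "dist base_point (act (w k) base_point) = dist (orb (mf k)) (act u (orb (nf k)))"
      using u dist_act[of "gpow (mf k)" base_point "act (w k) base_point"]
      by (simp add: w_def orb_def act_mult)
    then show ?thesis
      using mn(1)[OF that] u unfolding F_def w_def by simp
  qed
  moreover have "card F < card {..N}"
    using few unfolding F_def by simp
  ultimately have "\<not> inj_on w {..N}"
    using card_inj_on_le[of w "{..N}" F] finite_displacing unfolding F_def by fastforce
  then obtain k k' where kk: "k \<le> N" "k' \<le> N" "k \<noteq> k'" "w k = w k'"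
    unfolding inj_on_def by auto
  have "nf k \<noteq> nf k'"
  proof
    assume "nf k = nf k'"
    then have "dist (p k) (p k') \<le> 2 * (Kb + \<delta>)"
      using mn(2)[OF kk(1)] mn(2)[OF kk(2)] dist_triangle3[of "p k" "p k'" "act u (orb (nf k))"]
      by (simp add: dist_commute)
    then show False using separated[OF kk(1-3)] by simp
  qed
  moreover have "u \<otimes> gpow (nf k - nf k') \<otimes> inv u = gpow (mf k - mf k')"
    using conjugate_eq_of_double_coset_eq[OF _ _ _ _ u kk(4)[unfolded w_def]] u
    by (simp add: int_pow_diff)
  moreover have "dist (act u (orb (nf k))) (orb (mf k)) \<le> Ka + Kb + 2 * \<delta>"
    using mn(1)[OF kk(1)] by (simp add: dist_commute)
  ultimately show ?thesis
    using act_gpow_in_A[OF base_point_in_A] unfolding orb_def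
    by (intro exI[of _ "nf k - nf k'"] exI[of _ "mf k - mf k'"]) auto
qed

lemma morse_bound_nonneg: "0 \<le> r \<Longrightarrow> 0 \<le> morse_bound r"
  using proj_bound_nonneg[OF delta_nonneg] qg_mult_ge_1 qg_add_ge_1 delta_nonneg
  unfolding morse_bound_def by (simp add: add_nonneg_nonneg)

definition pigeon_radius :: real where
  "pigeon_radius = morse_bound \<delta> + morse_bound 0 + 2 * \<delta>"

definition sample_gap :: real where
  "sample_gap = qg_mult * (2 * (morse_bound 0 + \<delta>)) + qg_add + 1"

text \<open>By (CS2) a quasi-geodesic from \<open>u x\<close> to \<open>u y\<close> passes \<open>\<delta>\<close>-close to \<open>\<pi> (u x)\<close> and \<open>\<pi> (u y)\<close>;
  the Morse property does the rest.\<close>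

lemma long_segment_near_A_and_translate:
  assumes u: "u \<in> carrier G" and x: "x \<in> A" and y: "y \<in> A"
    and L: "0 \<le> L" and large: "L + 2 * \<delta> < dist (\<pi> (act u x)) (\<pi> (act u y))"
  obtains a b \<alpha> t1 t2 where "(a, b, \<alpha>) \<in> \<Gamma>" "t1 \<in> {a..b}" "t2 \<in> {a..b}" "L < t2 - t1"
    "\<And>\<tau>. \<tau> \<in> {t1..t2} \<Longrightarrow> dist (\<alpha> \<tau>) (\<pi> (\<alpha> \<tau>)) \<le> morse_bound \<delta>"
    "\<And>\<tau>. \<tau> \<in> {a..b} \<Longrightarrow> dist (\<alpha> \<tau>) (act u (\<pi> (act (inv u) (\<alpha> \<tau>)))) \<le> morse_bound 0"
proof -
  obtain a b \<alpha> where \<alpha>: "(a, b, \<alpha>) \<in> \<Gamma>" "\<alpha> a = act u x" "\<alpha> b = act u y"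
    by (rule exists_path)
  have "\<delta> < dist (\<pi> (\<alpha> a)) (\<pi> (\<alpha> b))"
    using large L delta_nonneg \<alpha> by simp
  then obtain s t where st: "s \<in> {a..b}" "dist (\<alpha> s) (\<pi> (\<alpha> a)) \<le> \<delta>" "t \<in> {a..b}" "dist (\<alpha> t) (\<pi> (\<alpha> b)) \<le> \<delta>"
    using constricting_map_path_meets[OF constricting_map_A \<alpha>(1)] by blast
  define t1 t2 where "t1 = min s t" and "t2 = max s t"
  have t12: "t1 \<in> {a..b}" "t2 \<in> {a..b}"
    unfolding t1_def t2_def using st by auto
  have "L < dist (\<alpha> s) (\<alpha> t)"
    using large \<alpha> st dist_triangle[of "\<pi> (\<alpha> a)" "\<pi> (\<alpha> b)" "\<alpha> s"] dist_triangle[of "\<alpha> s" "\<pi> (\<alpha> b)" "\<alpha> t"]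
    by (simp add: dist_commute)
  moreover have "dist (\<alpha> s) (\<alpha> t) \<le> t2 - t1"
    using path_dist_le[OF \<alpha>(1) st(1,3)] unfolding t1_def t2_def by linarith
  ultimately have long: "L < t2 - t1" by linarith
  have "\<exists>e\<in>A. dist (\<alpha> r) e \<le> \<delta>" if "r \<in> {t1, t2}" for r
    using that st constricting_map_in[OF constricting_map_A] unfolding t1_def t2_def
    by (cases "s \<le> t") (auto simp: min_def max_def)
  then obtain e1 e2 where "e1 \<in> A" "dist (\<alpha> t1) e1 \<le> \<delta>" "e2 \<in> A" "dist (\<alpha> t2) e2 \<le> \<delta>"
    by blast
  then have "dist (\<alpha> \<tau>) (\<pi> (\<alpha> \<tau>)) \<le> morse_bound \<delta>" if "\<tau> \<in> {t1..t2}" for \<tau>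
    using constricting_map_morse[OF constricting_map_A subpath[OF \<alpha>(1)] _ _ _ _ that] t12 long L by auto
  moreover have "dist (\<alpha> \<tau>) (act u (\<pi> (act (inv u) (\<alpha> \<tau>)))) \<le> morse_bound 0" if "\<tau> \<in> {a..b}" for \<tau>
    using constricting_map_morse[OF constricting_map_A path_act[OF inv_closed[OF u] \<alpha>(1)] x _ y _ that] u \<alpha>
    by (simp add: dist_act_inv)
  ultimately show thesis
    using that \<alpha>(1) t12 long by blast
qed

definition proj_threshold :: real where
  "proj_threshold =
     real (card {w \<in> carrier G. dist base_point (act w base_point) \<le> pigeon_radius}) * sample_gap + 2 * \<delta>"

text \<open>Sampling the fellow-travelling stretch at more points than there are group elements
  moving the base point by at most \<open>pigeon_radius\<close> forces two of the elements
  \<open>g\<^sup>-\<^sup>m u g\<^sup>n\<close> relating nearby orbit points to coincide.\<close>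

lemma commensurating_of_large_projection:
  assumes u: "u \<in> carrier G" and x: "x \<in> A" and y: "y \<in> A"
    and large: "proj_threshold < dist (\<pi> (act u x)) (\<pi> (act u y))"
  shows "\<exists>n m x0 a0. n \<noteq> 0 \<and> u \<otimes> gpow n \<otimes> inv u = gpow m \<and> x0 \<in> A \<and> a0 \<in> A \<and>
           dist (act u x0) a0 \<le> pigeon_radius"
proof -
  define N where "N = card {w \<in> carrier G. dist base_point (act w base_point) \<le> pigeon_radius}"
  define T where "T = sample_gap"
  have T: "qg_mult * (2 * (morse_bound 0 + \<delta>)) + qg_add < T" "0 \<le> T"
    using morse_bound_nonneg[of 0] delta_nonneg qg_mult_ge_1 qg_add_ge_1 unfolding T_def sample_gap_def
    by (auto intro!: add_nonneg_nonneg mult_nonneg_nonneg)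
  have NT: "0 \<le> real N * T" and large': "real N * T + 2 * \<delta> < dist (\<pi> (act u x)) (\<pi> (act u y))"
    using T(2) large unfolding proj_threshold_def N_def T_def by simp_all
  obtain a b \<alpha> t1 t2 where \<alpha>: "(a, b, \<alpha>) \<in> \<Gamma>" and t12: "t1 \<in> {a..b}" "t2 \<in> {a..b}" "real N * T < t2 - t1"
    and near_A: "\<And>\<tau>. \<tau> \<in> {t1..t2} \<Longrightarrow> dist (\<alpha> \<tau>) (\<pi> (\<alpha> \<tau>)) \<le> morse_bound \<delta>"
    and near_uA: "\<And>\<tau>. \<tau> \<in> {a..b} \<Longrightarrow> dist (\<alpha> \<tau>) (act u (\<pi> (act (inv u) (\<alpha> \<tau>)))) \<le> morse_bound 0"
    using long_segment_near_A_and_translate[OF u x y NT large'] by blast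
  define p where "p k = \<alpha> (t1 + real k * T)" for k
  have p_in: "t1 + real k * T \<in> {t1..t2}" if "k \<le> N" for k
    using t12(3) mult_right_mono[of "real k" "real N" T] that T(2) by auto
  show ?thesis
    unfolding pigeon_radius_def
  proof (rule commensurating_of_separated_points[OF u])
    fix k assume k: "k \<le> N"
    show "\<exists>e\<in>A. dist (p k) e \<le> morse_bound \<delta>"
      using near_A[OF p_in[OF k]] constricting_map_in[OF constricting_map_A] unfolding p_def by blast
    show "\<exists>e\<in>A. dist (p k) (act u e) \<le> morse_bound 0"
    proof
      show "dist (p k) (act u (\<pi> (act (inv u) (p k)))) \<le> morse_bound 0"
        using near_uA p_in[OF k] t12 unfolding p_def by simp
    qed (rule constricting_map_in[OF constricting_map_A])
  next
    fix k k' assume k: "k \<le> N" "k' \<le> N" "k \<noteq> k'"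
    have in_ab: "t1 + real k * T \<in> {a..b}" "t1 + real k' * T \<in> {a..b}"
      using p_in[OF k(1)] p_in[OF k(2)] t12 by auto
    have "1 \<le> \<bar>real k - real k'\<bar>"
      using k(3) by linarith
    then have "T \<le> \<bar>(t1 + real k * T) - (t1 + real k' * T)\<bar>"
      using T(2) by (simp add: abs_mult left_diff_distrib[symmetric] mult_le_cancel_right1)
    then show "2 * (morse_bound 0 + \<delta>) < dist (p k) (p k')"
      using path_param_le_of_dist_le[OF \<alpha> in_ab, of "2 * (morse_bound 0 + \<delta>)"] T(1)
      unfolding p_def by fastforce
  qed (simp add: N_def pigeon_radius_def)
qed

section \<open>Hausdorff distance, projections and the elementary closure\<close>

definition fellow_bound :: real where
  "fellow_bound = commens_bound pigeon_radius"

lemma translate_in_nbhd_of_large_projection: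
  assumes u: "u \<in> carrier G" and x: "x \<in> A" and y: "y \<in> A"
    and large: "proj_threshold < dist (\<pi> (act u x)) (\<pi> (act u y))"
  shows "translate_in_nbhd u fellow_bound" "translate_in_nbhd (inv u) fellow_bound"
proof -
  obtain n m x0 a0 where n: "n \<noteq> 0" and comm: "u \<otimes> gpow n \<otimes> inv u = gpow m"
    and x0: "x0 \<in> A" and a0: "a0 \<in> A" and d: "dist (act u x0) a0 \<le> pigeon_radius"
    using commensurating_of_large_projection[OF assms] by blast
  show "translate_in_nbhd u fellow_bound"
    unfolding fellow_bound_def by (rule translate_in_nbhd_of_commensurating[OF u n comm x0 a0 d])
  have comm': "inv u \<otimes> gpow m \<otimes> inv (inv u) = gpow n"
    using conjugate_inv_conjugate[OF u _ comm] by simp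
  have "m \<noteq> 0"
  proof
    assume "m = 0"
    then have "gpow n = gpow 0"
      using comm' u by simp
    then show False using n by (simp only: gpow_eq_iff)
  qed
  moreover have "dist (act (inv u) a0) x0 \<le> pigeon_radius"
    using d dist_act_inv[OF u, of a0 x0] by (metis dist_commute)
  ultimately show "translate_in_nbhd (inv u) fellow_bound"
    unfolding fellow_bound_def using translate_in_nbhd_of_commensurating[OF inv_closed[OF u] _ comm' a0 x0]
    by blast
qed

lemma exists_translate_near:
  assumes "u \<in> carrier G" "translate_in_nbhd (inv u) C" "a \<in> A"
  shows "\<exists>x\<in>A. dist a (act u x) \<le> C"
  using assms unfolding translate_in_nbhd_def by (metis dist_act_inv)

lemma ehausdist_le_of_translate_in_nbhd:
  assumes u: "u \<in> carrier G" and "translate_in_nbhd u C" "translate_in_nbhd (inv u) C"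
  shows "ehausdist (act u ` A) A \<le> ereal C"
  unfolding ehausdist_le_ereal_iff
proof (intro conjI ballI)
  fix z assume "z \<in> act u ` A"
  then show "infdist z A \<le> C"
    using assms(2) unfolding translate_in_nbhd_def by (auto intro: infdist_le2)
next
  fix a assume "a \<in> A"
  then show "infdist a (act u ` A) \<le> C"
    using exists_translate_near[OF u assms(3)] by (auto intro: infdist_le2)
qed

lemma translate_in_nbhd_of_infdist_le:
  assumes "\<And>x. x \<in> A \<Longrightarrow> infdist (act u x) A \<le> C"
  shows "translate_in_nbhd u (C + 1)"
  unfolding translate_in_nbhd_def
proof
  fix x assume "x \<in> A"
  then have "infdist (act u x) A < C + 1" using assms by force
  then show "\<exists>a\<in>A. dist (act u x) a \<le> C + 1"
    using infdist_less_imp_ex_dist_less base_point_in_A by (metis empty_iff less_imp_le)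
qed

text \<open>\<open>\<pi>\<close> moves the points of \<open>u A\<close> a bounded amount, while \<open>\<langle>g\<rangle>\<close> acts on \<open>A\<close> with unbounded displacement.\<close>

lemma large_projection_of_translate_in_nbhd:
  assumes u: "u \<in> carrier G" and near: "translate_in_nbhd u C"
  shows "\<exists>x\<in>A. \<exists>y\<in>A. R < dist (\<pi> (act u x)) (\<pi> (act u y))"
proof -
  have \<pi>_near: "dist (act u z) (\<pi> (act u z)) \<le> proj_bound C" if "z \<in> A" for z
    using near that dist_constricting_map_le[OF constricting_map_A]
    unfolding translate_in_nbhd_def by blast
  obtain i where i: "R + 2 * proj_bound C < dist (act (gpow i) base_point) base_point"
    using gpow_displacement_unbounded[OF base_point_in_A] by blast
  define x where "x = act (gpow i) base_point"
  have x: "x \<in> A" unfolding x_def by (rule act_gpow_in_A[OF base_point_in_A])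
  have "R < dist (\<pi> (act u x)) (\<pi> (act u base_point))"
    using i[folded x_def] \<pi>_near[OF x] \<pi>_near[OF base_point_in_A] u
      dist_triangle[of "act u x" "act u base_point" "\<pi> (act u x)"]
      dist_triangle[of "\<pi> (act u x)" "act u base_point" "\<pi> (act u base_point)"]
    by (simp add: dist_commute)
  then show ?thesis using x base_point_in_A by blast
qed

lemma translate_in_nbhd_of_finite_ehausdist:
  assumes u: "u \<in> carrier G" and fin: "ehausdist (act u ` A) A < \<infinity>"
  shows "translate_in_nbhd u fellow_bound" "translate_in_nbhd (inv u) fellow_bound"
proof -
  obtain C where "\<And>x. x \<in> act u ` A \<Longrightarrow> infdist x A \<le> C"
    using ehausdist_finite_imp_bounded[OF fin] by blast
  then have "translate_in_nbhd u (C + 1)"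
    by (intro translate_in_nbhd_of_infdist_le) blast
  then obtain x y where "x \<in> A" "y \<in> A" "proj_threshold < dist (\<pi> (act u x)) (\<pi> (act u y))"
    using large_projection_of_translate_in_nbhd[OF u] by blast
  then show "translate_in_nbhd u fellow_bound" "translate_in_nbhd (inv u) fellow_bound"
    using translate_in_nbhd_of_large_projection[OF u] by blast+
qed

lemma large_projection_iff_ehausdist_le:
  assumes rep: "representatives G act A R" and u: "u \<in> carrier G"
    and \<theta>: "proj_threshold \<le> \<theta>" "fellow_bound \<le> \<theta>"
  shows "ereal \<theta> < max (ediam (transl_map G act A R \<pi> u ` A)) (ediam (\<pi> ` act u ` A))
           \<longleftrightarrow> ehausdist (act u ` A) A \<le> ereal \<theta>"
proof
  have close_of_large: "ehausdist (act v ` A) A \<le> ereal \<theta> \<and> ehausdist (act (inv v) ` A) A \<le> ereal \<theta>"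
    if v: "v \<in> carrier G" and "x \<in> A" "y \<in> A" "\<theta> < dist (\<pi> (act v x)) (\<pi> (act v y))" for v x y
  proof -
    have "translate_in_nbhd v fellow_bound" "translate_in_nbhd (inv v) fellow_bound"
      using translate_in_nbhd_of_large_projection[OF v that(2,3)] that(4) \<theta>(1) by auto
    then have "ehausdist (act v ` A) A \<le> ereal fellow_bound"
      "ehausdist (act (inv v) ` A) A \<le> ereal fellow_bound"
      using ehausdist_le_of_translate_in_nbhd v by simp_all
    then show ?thesis using \<theta>(2) order_trans by fastforce
  qed
  assume "ereal \<theta> < max (ediam (transl_map G act A R \<pi> u ` A)) (ediam (\<pi> ` act u ` A))"
  then consider (transl) "ereal \<theta> < ediam (transl_map G act A R \<pi> u ` A)"
    | (proj) "ereal \<theta> < ediam (\<pi> ` act u ` A)"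
    by (auto simp: less_max_iff_disj)
  then show "ehausdist (act u ` A) A \<le> ereal \<theta>"
  proof cases
    case transl
    define r where "r = rep_of G act A R u"
    have r: "r \<in> carrier G" "act r ` A = act u ` A"
      unfolding r_def using rep_of_spec[OF rep u] by auto
    then obtain x y where "x \<in> A" "y \<in> A" "\<theta> < dist (\<pi> (act (inv r) x)) (\<pi> (act (inv r) y))"
      using transl unfolding ereal_less_ediam_iff by (auto simp: transl_map_def Let_def r_def[symmetric])
    then show ?thesis
      using close_of_large[OF inv_closed[OF r(1)]] r by simp
  next
    case proj
    then obtain x y where "x \<in> A" "y \<in> A" "\<theta> < dist (\<pi> (act u x)) (\<pi> (act u y))"
      unfolding ereal_less_ediam_iff by blast
    then show ?thesis
      using close_of_large[OF u] by blast
  qed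
next
  assume "ehausdist (act u ` A) A \<le> ereal \<theta>"
  then have "translate_in_nbhd u (\<theta> + 1)"
    unfolding ehausdist_le_ereal_iff by (intro translate_in_nbhd_of_infdist_le) blast
  then obtain x y where "x \<in> A" "y \<in> A" "\<theta> < dist (\<pi> (act u x)) (\<pi> (act u y))"
    using large_projection_of_translate_in_nbhd[OF u] by blast
  then show "ereal \<theta> < max (ediam (transl_map G act A R \<pi> u ` A)) (ediam (\<pi> ` act u ` A))"
    unfolding less_max_iff_disj ereal_less_ediam_iff by blast
qed

lemma elementary_closure_eq_ehausdist_le:
  assumes \<theta>: "fellow_bound \<le> \<theta>"
  shows "elementary_closure G act A = {u \<in> carrier G. ehausdist (act u ` A) A \<le> ereal \<theta>}"
  unfolding elementary_closure_def
proof (intro Collect_cong conj_cong refl iffI)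
  fix u assume u: "u \<in> carrier G" and "ehausdist (act u ` A) A < \<infinity>"
  then have "ehausdist (act u ` A) A \<le> ereal fellow_bound"
    using ehausdist_le_of_translate_in_nbhd translate_in_nbhd_of_finite_ehausdist by blast
  then show "ehausdist (act u ` A) A \<le> ereal \<theta>"
    using \<theta> order_trans by fastforce
next
  fix u assume "ehausdist (act u ` A) A \<le> ereal \<theta>"
  then show "ehausdist (act u ` A) A < \<infinity>"
    by (rule order.strict_trans1) simp
qed

lemma cyclic_subgroup_eq_generate: "cyclic_subgroup G g = generate G {g}"
  unfolding cyclic_subgroup_def by (simp add: generate_pow)

lemma index_elementary_closure_le:
  assumes \<theta>: "real (card {w \<in> carrier G. dist base_point (act w base_point) \<le> fellow_bound + \<delta>}) \<le> \<theta>"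
  shows "index_le G (elementary_closure G act A) (cyclic_subgroup G g) \<theta>"
proof -
  define H where "H = cyclic_subgroup G g"
  define F where "F = {w \<in> carrier G. dist base_point (act w base_point) \<le> fellow_bound + \<delta>}"
  define S where "S = {u <# H | u. u \<in> elementary_closure G act A}"
  have H: "subgroup H G"
    unfolding H_def cyclic_subgroup_eq_generate by (rule generate_is_subgroup) simp
  have "S \<subseteq> (\<lambda>w. w <# H) ` F"
  proof
    fix c assume "c \<in> S"
    then obtain u where c: "c = u <# H" and u: "u \<in> carrier G" and fin: "ehausdist (act u ` A) A < \<infinity>"
      unfolding S_def elementary_closure_def by blast
    obtain x where x: "x \<in> A" "dist base_point (act u x) \<le> fellow_bound"
      using exists_translate_near[OF u translate_in_nbhd_of_finite_ehausdist(2)[OF u fin] base_point_in_A]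
      by blast
    obtain j where j: "dist x (act (gpow j) base_point) \<le> \<delta>"
      using exists_gpow_near[OF x(1) base_point_in_A] by blast
    define w where "w = u \<otimes> gpow j"
    have w: "w \<in> carrier G" "act w base_point = act u (act (gpow j) base_point)"
      unfolding w_def using u by (simp_all add: act_mult)
    have "dist base_point (act w base_point) \<le> fellow_bound + \<delta>"
      using x(2) j u w(2) dist_triangle[of base_point "act w base_point" "act u x"] by simp
    then have "w \<in> F" unfolding F_def using w(1) by blast
    moreover have "w <# H = u <# H"
      unfolding w_def using lcos_m_assoc[OF subgroup.subset[OF H] u, of "gpow j"] coset_join3[of "gpow j" H] H
      by (simp add: H_def cyclic_subgroup_def)
    ultimately show "c \<in> (\<lambda>w. w <# H) ` F" using c by blast
  qed
  moreover have "finite F"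
    unfolding F_def by (rule finite_displacing)
  ultimately have "finite S" "card S \<le> card F"
    using finite_subset card_image_le card_mono order_trans by (metis finite_imageI)+
  then show ?thesis
    using \<theta> unfolding index_le_def S_def H_def F_def by auto
qed

end

theorem mainTheorem15:
  fixes G :: "('g, 'b) monoid_scheme"
    and act :: "'g \<Rightarrow> 'a::metric_space \<Rightarrow> 'a"
    and \<Gamma> :: "'a path_t set"
    and \<mu> \<nu> \<delta> :: real and g :: 'g and A :: "'a set" and \<pi> :: "'a \<Rightarrow> 'a" and R :: "'g set"
  assumes "path_system_group \<mu> \<nu> G act \<Gamma>"
    and "constricting_element G act \<Gamma> \<delta> g A \<pi>"
    and "representatives G act A R"
  shows "\<exists>\<theta>::real. \<theta> \<ge> 1 \<and>
    (\<forall>u\<in>carrier G.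
       max (ediam (transl_map G act A R \<pi> u ` A)) (ediam (\<pi> ` act u ` A)) > ereal \<theta>
       \<longleftrightarrow> ehausdist (act u ` A) A \<le> ereal \<theta>) \<and>
    elementary_closure G act A = {u\<in>carrier G. ehausdist (act u ` A) A \<le> ereal \<theta>} \<and>
    index_le G (elementary_closure G act A) (cyclic_subgroup G g) \<theta>"
proof -
  interpret constricting_action G act \<Gamma> \<mu> \<nu> \<delta> g A \<pi>
    using assms(1,2) by (rule constricting_action.intro)
  define \<theta> where "\<theta> = max 1 (max proj_threshold (max fellow_bound
    (real (card {w \<in> carrier G. dist base_point (act w base_point) \<le> fellow_bound + \<delta>}))))"
  have "1 \<le> \<theta>" "proj_threshold \<le> \<theta>" "fellow_bound \<le> \<theta>"
    "real (card {w \<in> carrier G. dist base_point (act w base_point) \<le> fellow_bound + \<delta>}) \<le> \<theta>"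
    unfolding \<theta>_def by auto
  then show ?thesis
    using large_projection_iff_ehausdist_le[OF assms(3)] elementary_closure_eq_ehausdist_le
      index_elementary_closure_le
    by blast
qed

end
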